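(* Let $(S,d)$ be a finite metric space partitioned into two disjoint groups $S=S_1\cup S_2$, let $k_1,k_2$ be nonnegative integers with $k=k_1+k_2$, and let $r^*$ be the optimal radius of the fair $k$-center problem. Suppose the points arrive in a stream in which all points of $S_1$ arrive before all points of $S_2$, and let $\Gamma_1',\Gamma_2',\Gamma_{sub}$ be produced by Algorithm B (described in the context) with $\lambda=2r^*$. Then there is a subset $\Gamma_1''\subseteq\Gamma_1'$ all of whose elements have replacements, such that with $\Gamma'_{sub}=\{\sigma(c):c\in\Gamma_1''\}$ the set $C=\Gamma_2'\cup(\Gamma_1'\setminus\Gamma_1'')\cup\Gamma'_{sub}$ is a feasible solution of the fair $k$-center problem with $d(s,C)\le 3r^*$ for every $s\in S$.
   Context: Fair $k$-center: $C\subseteq S$ is feasible if $|C\cap S_l|\le k_l$ for $l=1,2$; cost $\max_{s\in S}d(s,C)$, $d(s,C)=\min_{c\in C}d(s,c)$, $d(s,\emptyset)=\infty$; $r^*$ is the minimum cost over feasible $C$. Algorithm B (parameter $\lambda=2r^*$): initialize $\Gamma_1'=\Gamma_2'=\Gamma_{sub}=\emptyset$. Upon each arriving $i\in S_1$: if $d(i,\Gamma_1')>\lambda$, add $i$ to $\Gamma_1'$. Upon each arriving $i\in S_2$: if $|\Gamma_1'|\le k_1$, then add $i$ to $\Gamma_2'$ iff $d(i,\Gamma_1')>3\lambda/2$ and $d(i,\Gamma_2')>\lambda$; otherwise ($|\Gamma_1'|>k_1$), add $i$ to $\Gamma_2'$ iff $d(i,\Gamma_1'\cup\Gamma_2')>\lambda$,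 and, in addition, if there is a point $j\in\Gamma_1'$ that has no replacement yet and satisfies $d(i,j)\le\lambda/2$, add $i$ to $\Gamma_{sub}$ and designate $i$ as the replacement $\sigma(j)$ of such a $j$. Output $\Gamma_1',\Gamma_2',\Gamma_{sub}$. *)

theory Defs
  imports "HOL-Library.Extended_Real"
begin

definition metric_on :: "'a set \<Rightarrow> ('a \<Rightarrow> 'a \<Rightarrow> real) \<Rightarrow> bool" where
  "metric_on S d \<longleftrightarrow>
     (\<forall>x\<in>S. \<forall>y\<in>S. d x y \<ge> 0 \<and> (d x y = 0 \<longleftrightarrow> x = y) \<and> d x y = d y x) \<and>
     (\<forall>x\<in>S. \<forall>y\<in>S. \<forall>z\<in>S. d x z \<le> d x y + d y z)"

text \<open>d(s,C) = min over c in C of d(s,c), with d(s,{}) = infinity (Inf of the empty set).\<close>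
definition dist_set :: "('a \<Rightarrow> 'a \<Rightarrow> real) \<Rightarrow> 'a \<Rightarrow> 'a set \<Rightarrow> ereal" where
  "dist_set d s C = (INF c\<in>C. ereal (d s c))"

definition fair_feasible :: "'a set \<Rightarrow> 'a set \<Rightarrow> nat \<Rightarrow> nat \<Rightarrow> 'a set \<Rightarrow> bool" where
  "fair_feasible S1 S2 k1 k2 C \<longleftrightarrow>
     C \<subseteq> S1 \<union> S2 \<and> card (C \<inter> S1) \<le> k1 \<and> card (C \<inter> S2) \<le> k2"

definition fkc_cost :: "('a \<Rightarrow> 'a \<Rightarrow> real) \<Rightarrow> 'a set \<Rightarrow> 'a set \<Rightarrow> ereal" where
  "fkc_cost d S C = (SUP s\<in>S. dist_set d s C)"

definition opt_radius :: "('a \<Rightarrow> 'a \<Rightarrow> real) \<Rightarrow> 'a set \<Rightarrow> 'a set \<Rightarrow> nat \<Rightarrow> nat \<Rightarrow> ereal" where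
  "opt_radius d S1 S2 k1 k2 =
     (INF C\<in>{C. fair_feasible S1 S2 k1 k2 C}. fkc_cost d (S1 \<union> S2) C)"

text \<open>State of Algorithm B: (Gamma_1', Gamma_2', Gamma_sub, sigma), sigma the partial replacement map.\<close>
type_synonym 'a algB_state = "'a set \<times> 'a set \<times> 'a set \<times> ('a \<Rightarrow> 'a option)"

text \<open>One step of Algorithm B on arriving point i (parameter lam = lambda).
  The choice of j in the replacement step is left nondeterministic.\<close>
inductive algB_step ::
  "('a \<Rightarrow> 'a \<Rightarrow> real) \<Rightarrow> 'a set \<Rightarrow> 'a set \<Rightarrow> nat \<Rightarrow> ereal \<Rightarrow> 'a \<Rightarrow> 'a algB_state \<Rightarrow> 'a algB_state \<Rightarrow> bool"
  for d S1 S2 k1 lam where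
  s1: "i \<in> S1 \<Longrightarrow>
       algB_step d S1 S2 k1 lam i (G1, G2, Gs, \<sigma>)
         ((if dist_set d i G1 > lam then insert i G1 else G1), G2, Gs, \<sigma>)"
| s2_small: "i \<in> S2 \<Longrightarrow> card G1 \<le> k1 \<Longrightarrow>
       algB_step d S1 S2 k1 lam i (G1, G2, Gs, \<sigma>)
         (G1, (if dist_set d i G1 > 3 * lam / 2 \<and> dist_set d i G2 > lam
               then insert i G2 else G2), Gs, \<sigma>)"
| s2_big_sub: "i \<in> S2 \<Longrightarrow> card G1 > k1 \<Longrightarrow>
       j \<in> G1 \<Longrightarrow> \<sigma> j = None \<Longrightarrow> ereal (d i j) \<le> lam / 2 \<Longrightarrow>
       algB_step d S1 S2 k1 lam i (G1, G2, Gs, \<sigma>)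
         (G1, (if dist_set d i (G1 \<union> G2) > lam then insert i G2 else G2),
          insert i Gs, \<sigma>(j \<mapsto> i))"
| s2_big_nosub: "i \<in> S2 \<Longrightarrow> card G1 > k1 \<Longrightarrow>
       \<not> (\<exists>j\<in>G1. \<sigma> j = None \<and> ereal (d i j) \<le> lam / 2) \<Longrightarrow>
       algB_step d S1 S2 k1 lam i (G1, G2, Gs, \<sigma>)
         (G1, (if dist_set d i (G1 \<union> G2) > lam then insert i G2 else G2), Gs, \<sigma>)"

inductive algB_run ::
  "('a \<Rightarrow> 'a \<Rightarrow> real) \<Rightarrow> 'a set \<Rightarrow> 'a set \<Rightarrow> nat \<Rightarrow> ereal \<Rightarrow> 'a list \<Rightarrow> 'a algB_state \<Rightarrow> 'a algB_state \<Rightarrow> bool"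
  for d S1 S2 k1 lam where
  Nil: "algB_run d S1 S2 k1 lam [] st st"
| Cons: "algB_step d S1 S2 k1 lam i st st' \<Longrightarrow> algB_run d S1 S2 k1 lam xs st' st'' \<Longrightarrow>
         algB_run d S1 S2 k1 lam (i # xs) st st''"

end

theory Submission
  imports Defs
begin

(* Write r = r*, so that lambda = 2r and lambda/2 = r, and fix an optimal solution Cs; every point
  lies within r of Cs. A point is within r of at most one point of a 2r-separated set, so
  sending each point of such a set to a nearby point of Cs is injective: 2r-separated sets
  are no larger than the parts of Cs they map into.

  During the S1-phase, Gamma_1' grows greedily into a 2r-separated set covering S1 within 2r.
  If |Gamma_1'| <= k1, the S2-phase makes Gamma_2' a 2r-separated set, more than 3r away from
  Gamma_1', that covers the rest of S2; a point of Cs within r of a point of Gamma_2' cannot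
  lie in S1 (it would then be within 2r of Gamma_1'), hence |Gamma_2'| <= k2 and
  Gamma_1' \<union> Gamma_2' is a solution of radius 3r.
  If |Gamma_1'| > k1, then Gamma_1' \<union> Gamma_2' is 2r-separated, so it has at most k1 + k2
  points. A centre of Gamma_1' whose Cs-point lies in S2 got a replacement when that point
  arrived, so at most k1 centres lack one. Swapping |Gamma_1'| - k1 replaced centres for their
  replacements, which are within r of them, gives a feasible solution of radius 3r. *)

lemma dist_set_le_iff:
  assumes "finite C"
  shows "dist_set d s C \<le> ereal t \<longleftrightarrow> (\<exists>c\<in>C. d s c \<le> t)"
proof (cases "C = {}")
  case True
  then show ?thesis by (simp add: dist_set_def top_ereal_def)
next
  case False
  then have "dist_set d s C = Min ((\<lambda>c. ereal (d s c)) ` C)"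
    unfolding dist_set_def using assms by (simp add: cInf_eq_Min)
  then show ?thesis using assms False by (simp add: Min_le_iff)
qed

lemma dist_set_gt_iff: "finite C \<Longrightarrow> ereal t < dist_set d s C \<longleftrightarrow> (\<forall>c\<in>C. t < d s c)"
  using dist_set_le_iff[of C d s t] by (auto simp: not_le)

lemma dist_set_le: "c \<in> C \<Longrightarrow> d s c \<le> t \<Longrightarrow> dist_set d s C \<le> ereal t"
  unfolding dist_set_def by (rule INF_lower2) auto

lemma ball_dist_set_le: "\<forall>s\<in>S. \<exists>c\<in>C. d s c \<le> t \<Longrightarrow> \<forall>s\<in>S. dist_set d s C \<le> ereal t"
  by (meson dist_set_le)

lemma fkc_cost_le_iff:
  "finite C \<Longrightarrow> fkc_cost d S C \<le> ereal t \<longleftrightarrow> (\<forall>s\<in>S. \<exists>c\<in>C. d s c \<le> t)"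
  by (simp add: fkc_cost_def SUP_le_iff dist_set_le_iff)

lemma opt_radius_attained:
  assumes "finite (S1 \<union> S2)"
  obtains C where "fair_feasible S1 S2 k1 k2 C"
    and "opt_radius d S1 S2 k1 k2 = fkc_cost d (S1 \<union> S2) C"
proof -
  let ?F = "{C. fair_feasible S1 S2 k1 k2 C}"
  have "finite ?F"
    by (rule finite_subset[of _ "Pow (S1 \<union> S2)"]) (use assms in \<open>auto simp: fair_feasible_def\<close>)
  moreover have "{} \<in> ?F" by (simp add: fair_feasible_def)
  ultimately have "Min (fkc_cost d (S1 \<union> S2) ` ?F) \<in> fkc_cost d (S1 \<union> S2) ` ?F"
    by (intro Min_in) auto
  moreover have "opt_radius d S1 S2 k1 k2 = Min (fkc_cost d (S1 \<union> S2) ` ?F)"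
    unfolding opt_radius_def by (rule cInf_eq_Min) (use \<open>finite ?F\<close> \<open>{} \<in> ?F\<close> in auto)
  ultimately show ?thesis using that by auto
qed

lemma opt_radius_realised:
  assumes "finite (S1 \<union> S2)" and "opt_radius d S1 S2 k1 k2 = ereal r"
  obtains Cs where "fair_feasible S1 S2 k1 k2 Cs" and "\<forall>s\<in>S1 \<union> S2. \<exists>c\<in>Cs. d s c \<le> r"
proof -
  obtain Cs where Cs: "fair_feasible S1 S2 k1 k2 Cs"
    and cost: "opt_radius d S1 S2 k1 k2 = fkc_cost d (S1 \<union> S2) Cs"
    using opt_radius_attained[OF assms(1)] .
  have "Cs \<subseteq> S1 \<union> S2" using Cs by (simp add: fair_feasible_def)
  then have "finite Cs" using assms(1) by (rule finite_subset)
  moreover have "fkc_cost d (S1 \<union> S2) Cs \<le> ereal r" unfolding cost[symmetric] assms(2) by simp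
  ultimately show ?thesis using that Cs by (simp add: fkc_cost_le_iff)
qed

lemma metric_on_nonneg: "metric_on S d \<Longrightarrow> x \<in> S \<Longrightarrow> y \<in> S \<Longrightarrow> 0 \<le> d x y"
  unfolding metric_on_def by blast

lemma metric_on_self: "metric_on S d \<Longrightarrow> x \<in> S \<Longrightarrow> d x x = 0"
  unfolding metric_on_def by blast

lemma metric_on_sym: "metric_on S d \<Longrightarrow> x \<in> S \<Longrightarrow> y \<in> S \<Longrightarrow> d x y = d y x"
  unfolding metric_on_def by blast

lemma metric_on_triangle:
  "metric_on S d \<Longrightarrow> x \<in> S \<Longrightarrow> y \<in> S \<Longrightarrow> z \<in> S \<Longrightarrow> d x z \<le> d x y + d y z"
  unfolding metric_on_def by blast

lemma metric_on_triangle_le: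
  "metric_on S d \<Longrightarrow> x \<in> S \<Longrightarrow> y \<in> S \<Longrightarrow> z \<in> S \<Longrightarrow> d x y \<le> a \<Longrightarrow> d y z \<le> b \<Longrightarrow>
   d x z \<le> a + b"
  using metric_on_triangle[of S d x y z] by linarith

lemma opt_radius_nonneg:
  assumes "metric_on (S1 \<union> S2) d" and "s \<in> S1 \<union> S2"
  shows "0 \<le> opt_radius d S1 S2 k1 k2"
  unfolding opt_radius_def fkc_cost_def
proof (rule INF_greatest)
  fix C assume "C \<in> {C. fair_feasible S1 S2 k1 k2 C}"
  then have "C \<subseteq> S1 \<union> S2" by (simp add: fair_feasible_def)
  have "0 \<le> dist_set d s C"
    unfolding dist_set_def
    by (rule INF_greatest) (use assms \<open>C \<subseteq> S1 \<union> S2\<close> in \<open>auto intro: metric_on_nonneg\<close>)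
  then show "0 \<le> (SUP s\<in>S1 \<union> S2. dist_set d s C)"
    using assms(2) by (blast intro: SUP_upper2)
qed

lemma separated_near_unique:
  assumes "metric_on S d" "A \<subseteq> S" "x \<in> S" "pairwise (\<lambda>a b. 2 * \<rho> < d a b) A"
    and "a \<in> A" "b \<in> A" "d x a \<le> \<rho>" "d x b \<le> \<rho>"
  shows "a = b"
proof (rule ccontr)
  assume "a \<noteq> b"
  have "d a b \<le> d a x + d x b"
    using assms by (blast intro: metric_on_triangle)
  also have "d a x = d x a"
    using assms by (blast intro: metric_on_sym)
  finally have "d a b \<le> 2 * \<rho>" using assms(7,8) by linarith
  moreover have "2 * \<rho> < d a b" using assms(4-6) \<open>a \<noteq> b\<close> by (auto simp: pairwise_def)
  ultimately show False by simp
qed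

lemma separated_card_le:
  assumes "metric_on S d" "A \<subseteq> S" "B \<subseteq> S" "finite B" "pairwise (\<lambda>a b. 2 * \<rho> < d a b) A"
    and near: "\<forall>a\<in>A. \<exists>b\<in>B. d a b \<le> \<rho>"
  shows "card A \<le> card B"
proof -
  obtain f where f: "\<forall>a\<in>A. f a \<in> B \<and> d (f a) a \<le> \<rho>"
    using near assms(1-3) by (metis metric_on_sym subsetD)
  have "inj_on f A"
  proof (rule inj_onI)
    fix a b assume "a \<in> A" "b \<in> A" "f a = f b"
    moreover have "f a \<in> S" using f \<open>a \<in> A\<close> assms(3) by blast
    ultimately show "a = b"
      using separated_near_unique[OF assms(1,2) _ assms(5)] f by metis
  qed
  moreover have "f ` A \<subseteq> B" using f by blast
  ultimately show ?thesis using assms(4) by (rule card_inj_on_le)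
qed

lemma separated_insert:
  assumes "metric_on S d" "A \<subseteq> S" "i \<in> S" "finite A"
    and "pairwise (\<lambda>a b. \<delta> < d a b) A" "ereal \<delta> < dist_set d i A"
  shows "pairwise (\<lambda>a b. \<delta> < d a b) (insert i A)"
proof -
  have "\<forall>a\<in>A. \<delta> < d i a \<and> \<delta> < d a i"
    using assms dist_set_gt_iff metric_on_sym by (metis subsetD)
  then show ?thesis using assms(5) by (auto simp: pairwise_insert)
qed

lemma greedy_insert:
  assumes "metric_on S d" "A \<subseteq> S" "i \<in> S" "finite A"
    and "pairwise (\<lambda>a b. \<delta> < d a b) A" "0 \<le> \<delta>"
  defines "A' \<equiv> if ereal \<delta> < dist_set d i A then insert i A else A"
  shows "pairwise (\<lambda>a b. \<delta> < d a b) A'" and "\<exists>a\<in>A'. d i a \<le> \<delta>"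
proof -
  show "pairwise (\<lambda>a b. \<delta> < d a b) A'"
    unfolding A'_def using separated_insert[OF assms(1-5)] assms(5) by simp
  have "d i i \<le> \<delta>" using metric_on_self[OF assms(1,3)] assms(6) by simp
  then show "\<exists>a\<in>A'. d i a \<le> \<delta>"
    unfolding A'_def using dist_set_le_iff[OF assms(4), of d i \<delta>] by (auto simp: not_less)
qed

lemma algB_run_append:
  "algB_run d S1 S2 k1 lam (xs @ ys) st st'' \<Longrightarrow>
   \<exists>st'. algB_run d S1 S2 k1 lam xs st st' \<and> algB_run d S1 S2 k1 lam ys st' st''"
proof (induction xs arbitrary: st)
  case Nil
  then show ?case using algB_run.Nil by fastforce
next
  case (Cons i xs)
  then obtain st1 where "algB_step d S1 S2 k1 lam i st st1" "algB_run d S1 S2 k1 lam (xs @ ys) st1 st''"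
    by (auto elim: algB_run.cases)
  with Cons.IH show ?case by (meson algB_run.Cons)
qed

lemma algB_run_invariant:
  assumes "algB_run d S1 S2 k1 lam xs st st'" "I P st"
    and "\<And>i P s s'. algB_step d S1 S2 k1 lam i s s' \<Longrightarrow> i \<in> set xs \<Longrightarrow> I P s \<Longrightarrow> I (insert i P) s'"
  shows "I (P \<union> set xs) st'"
  using assms
proof (induction arbitrary: P rule: algB_run.induct)
  case (Nil st)
  then show ?case by simp
next
  case (Cons i st st' xs st'')
  have "I (insert i P) st'" using Cons.prems Cons.hyps(1) by simp
  then have "I (insert i P \<union> set xs) st''" by (rule Cons.IH) (use Cons.prems(2) in auto)
  then show ?case by simp
qed

lemma algB_run_infinite_threshold:
  assumes "algB_run d S1 S2 k1 \<infinity> xs ({}, {}, Gs, \<sigma>) (G1, G2, Gs', \<sigma>')"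
  shows "G1 = {} \<and> G2 = {}"
proof -
  have "(\<lambda>P st. fst st = {} \<and> fst (snd st) = {}) ({} \<union> set xs) (G1, G2, Gs', \<sigma>')"
  proof (rule algB_run_invariant[OF assms])
    fix i P st st'
    assume "algB_step d S1 S2 k1 \<infinity> i st st'" "fst st = {} \<and> fst (snd st) = {}"
    then show "fst st' = {} \<and> fst (snd st') = {}" by cases auto
  qed simp
  then show ?thesis by simp
qed

abbreviation swapped_solution ::
  "'a set \<Rightarrow> 'a set \<Rightarrow> ('a \<Rightarrow> 'a option) \<Rightarrow> 'a set \<Rightarrow> 'a set" where
  "swapped_solution G1 G2 \<sigma> G1'' \<equiv> G2 \<union> (G1 - G1'') \<union> (\<lambda>c. the (\<sigma> c)) ` G1''"

(* The analysis only needs r to be the radius of some feasible solution Cs; the theorem takes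
  an optimal one. *)
locale algB_analysis =
  fixes d :: "'a \<Rightarrow> 'a \<Rightarrow> real" and S1 S2 :: "'a set" and k1 k2 :: nat
    and r :: real and Cs :: "'a set"
  assumes metric: "metric_on (S1 \<union> S2) d"
    and disjoint: "S1 \<inter> S2 = {}"
    and finite: "finite (S1 \<union> S2)"
    and reference_feasible: "fair_feasible S1 S2 k1 k2 Cs"
    and reference_covers: "\<forall>s\<in>S1 \<union> S2. \<exists>c\<in>Cs. d s c \<le> r"
begin

abbreviation step :: "'a \<Rightarrow> 'a algB_state \<Rightarrow> 'a algB_state \<Rightarrow> bool" where
  "step \<equiv> algB_step d S1 S2 k1 (2 * ereal r)"

abbreviation separated :: "'a set \<Rightarrow> bool" where
  "separated A \<equiv> pairwise (\<lambda>a b. 2 * r < d a b) A"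

lemma reference_subset: "Cs \<subseteq> S1 \<union> S2"
  using reference_feasible by (simp add: fair_feasible_def)

lemma radius_nonneg:
  assumes "s \<in> S1 \<union> S2"
  shows "0 \<le> r"
proof -
  obtain c where "c \<in> Cs" "d s c \<le> r" using reference_covers assms by blast
  moreover have "0 \<le> d s c" using metric_on_nonneg[OF metric assms] \<open>c \<in> Cs\<close> reference_subset by blast
  ultimately show ?thesis by linarith
qed

lemma finite_point_set: "A \<subseteq> S1 \<union> S2 \<Longrightarrow> finite A"
  by (rule finite_subset[OF _ finite])

lemma separated_card_le_reference:
  assumes "A \<subseteq> S1 \<union> S2" "separated A" and "\<forall>a\<in>A. \<forall>c\<in>Cs. d a c \<le> r \<longrightarrow> c \<in> T"
  shows "card A \<le> card (Cs \<inter> T)"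
proof (rule separated_card_le[OF metric assms(1) _ _ assms(2)])
  show "Cs \<inter> T \<subseteq> S1 \<union> S2" "finite (Cs \<inter> T)"
    using reference_feasible finite_point_set by (auto simp: fair_feasible_def)
  show "\<forall>a\<in>A. \<exists>c\<in>Cs \<inter> T. d a c \<le> r"
    using assms(1,3) reference_covers by blast
qed

fun phase1_inv :: "'a set \<Rightarrow> 'a algB_state \<Rightarrow> bool" where
  "phase1_inv P (G1, G2, Gs, \<sigma>) \<longleftrightarrow>
     G1 \<subseteq> S1 \<and> separated G1 \<and> (\<forall>s\<in>P. \<exists>g\<in>G1. d s g \<le> 2 * r) \<and> G2 = {} \<and> \<sigma> = Map.empty"

lemma phase1_step:
  assumes "step i st st'" "i \<in> S1" "phase1_inv P st"
  shows "phase1_inv (insert i P) st'"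
proof -
  obtain G1 Gs where st: "st = (G1, {}, Gs, Map.empty)" and G1: "G1 \<subseteq> S1" "separated G1"
    and cover: "\<forall>s\<in>P. \<exists>g\<in>G1. d s g \<le> 2 * r"
    using assms(3) by (cases st) auto
  have "i \<notin> S2" using assms(2) disjoint by blast
  have st': "st' = (if ereal (2 * r) < dist_set d i G1 then insert i G1 else G1, {}, Gs, Map.empty)"
    using assms(1) \<open>i \<notin> S2\<close> unfolding st by cases auto
  have "G1 \<subseteq> S1 \<union> S2" "0 \<le> 2 * r" using G1(1) radius_nonneg assms(2) by auto
  note greedy = greedy_insert[OF metric this(1) _ finite_point_set[OF this(1)] G1(2) this(2), of i]
  show ?thesis
    using greedy assms(2) G1(1) cover unfolding st' by auto
qed

lemma phase1_outcome:
  assumes "set xs1 = S1" and "algB_run d S1 S2 k1 (2 * ereal r) xs1 ({}, {}, {}, Map.empty) st"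
  obtains G Gs where "st = (G, {}, Gs, Map.empty)" and "G \<subseteq> S1" and "separated G"
    and "\<forall>s\<in>S1. \<exists>g\<in>G. d s g \<le> 2 * r"
proof -
  have "phase1_inv ({} \<union> set xs1) st"
  proof (rule algB_run_invariant[OF assms(2), where I = phase1_inv])
    fix i P s s' assume "step i s s'" "i \<in> set xs1" "phase1_inv P s"
    then show "phase1_inv (insert i P) s'" using assms(1) phase1_step by blast
  qed simp
  with assms(1) show ?thesis using that by (cases st) auto
qed

fun phase2_small_inv :: "'a set \<Rightarrow> 'a set \<Rightarrow> 'a algB_state \<Rightarrow> bool" where
  "phase2_small_inv G P (G1, G2, Gs, \<sigma>) \<longleftrightarrow>
     G1 = G \<and> G2 \<subseteq> S2 \<and> separated G2 \<and> (\<forall>g\<in>G2. \<forall>j\<in>G. 3 * r < d g j) \<and>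
     (\<forall>s\<in>P. (\<exists>g\<in>G. d s g \<le> 3 * r) \<or> (\<exists>g\<in>G2. d s g \<le> 2 * r))"

lemma phase2_small_step:
  assumes "step i st st'" "i \<in> S2" "phase2_small_inv G P st" "G \<subseteq> S1" "card G \<le> k1"
  shows "phase2_small_inv G (insert i P) st'"
proof -
  obtain G2 Gs \<sigma> where st: "st = (G, G2, Gs, \<sigma>)" and G2: "G2 \<subseteq> S2" "separated G2"
    and far: "\<forall>g\<in>G2. \<forall>j\<in>G. 3 * r < d g j"
    and cover: "\<forall>s\<in>P. (\<exists>g\<in>G. d s g \<le> 3 * r) \<or> (\<exists>g\<in>G2. d s g \<le> 2 * r)"
    using assms(3) by (cases st) auto
  have "i \<notin> S1" using assms(2) disjoint by blast
  define far_i where "far_i \<longleftrightarrow> ereal (3 * r) < dist_set d i G \<and> ereal (2 * r) < dist_set d i G2"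
  have st': "st' = (G, if far_i then insert i G2 else G2, Gs, \<sigma>)"
    using assms(1) \<open>i \<notin> S1\<close> assms(5) unfolding st far_i_def by cases auto
  have fin: "finite G" "finite G2" using assms(4) G2(1) by (auto intro!: finite_point_set)
  show ?thesis
  proof (cases far_i)
    case True
    then have "\<forall>j\<in>G. 3 * r < d i j" using dist_set_gt_iff[OF fin(1)] unfolding far_i_def by blast
    moreover have "separated (insert i G2)"
      using separated_insert[OF metric _ _ fin(2) G2(2)] True G2(1) assms(2) unfolding far_i_def by auto
    moreover have "d i i \<le> 2 * r"
      using metric_on_self[OF metric, of i] radius_nonneg[of i] assms(2) by simp
    ultimately show ?thesis using True G2 far cover assms(2) unfolding st' by auto
  next
    case False
    then have "(\<exists>g\<in>G. d i g \<le> 3 * r) \<or> (\<exists>g\<in>G2. d i g \<le> 2 * r)"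
      using dist_set_le_iff[OF fin(1)] dist_set_le_iff[OF fin(2)] unfolding far_i_def by (auto simp: not_less)
    then show ?thesis using False G2 far cover unfolding st' by auto
  qed
qed

lemma phase2_small_card_le:
  assumes "G1 \<subseteq> S1" and cover1: "\<forall>s\<in>S1. \<exists>g\<in>G1. d s g \<le> 2 * r"
    and inv: "phase2_small_inv G1 S2 (G1, G2, Gs, \<sigma>)"
  shows "card G2 \<le> k2"
proof -
  from inv have G2: "G2 \<subseteq> S2" "separated G2" and far: "\<forall>g\<in>G2. \<forall>j\<in>G1. 3 * r < d g j"
    by auto
  have "card G2 \<le> card (Cs \<inter> S2)"
  proof (rule separated_card_le_reference)
    show "\<forall>g\<in>G2. \<forall>c\<in>Cs. d g c \<le> r \<longrightarrow> c \<in> S2"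
    proof (intro ballI impI)
      fix g c assume "g \<in> G2" "c \<in> Cs" "d g c \<le> r"
      show "c \<in> S2"
      proof (rule ccontr)
        assume "c \<notin> S2"
        then have "c \<in> S1" using \<open>c \<in> Cs\<close> reference_subset by blast
        then obtain j where "j \<in> G1" "d c j \<le> 2 * r" using cover1 by blast
        then have "d g j \<le> r + 2 * r"
          using metric_on_triangle_le[OF metric, of g c j] \<open>g \<in> G2\<close> \<open>c \<in> S1\<close> \<open>d g c \<le> r\<close> G2(1) assms(1)
          by blast
        with far \<open>g \<in> G2\<close> \<open>j \<in> G1\<close> show False by force
      qed
    qed
  qed (use G2 in auto)
  also have "\<dots> \<le> k2" using reference_feasible by (simp add: fair_feasible_def)
  finally show ?thesis .
qed

lemma phase2_small_solution:
  assumes "G1 \<subseteq> S1" "card G1 \<le> k1" and cover1: "\<forall>s\<in>S1. \<exists>g\<in>G1. d s g \<le> 2 * r"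
    and inv: "phase2_small_inv G1 S2 (G1, G2, Gs, \<sigma>)"
  shows "fair_feasible S1 S2 k1 k2 (G1 \<union> G2)" and "\<forall>s\<in>S1 \<union> S2. \<exists>c\<in>G1 \<union> G2. d s c \<le> 3 * r"
proof -
  from inv have G2: "G2 \<subseteq> S2"
    and cover2: "\<forall>s\<in>S2. (\<exists>g\<in>G1. d s g \<le> 3 * r) \<or> (\<exists>g\<in>G2. d s g \<le> 2 * r)"
    by auto
  have "(G1 \<union> G2) \<inter> S1 = G1" "(G1 \<union> G2) \<inter> S2 = G2" using assms(1) G2 disjoint by auto
  then show "fair_feasible S1 S2 k1 k2 (G1 \<union> G2)"
    using phase2_small_card_le[OF assms(1) cover1 inv] assms(1,2) G2 by (auto simp: fair_feasible_def)
  show "\<forall>s\<in>S1 \<union> S2. \<exists>c\<in>G1 \<union> G2. d s c \<le> 3 * r"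
  proof
    fix s assume s: "s \<in> S1 \<union> S2"
    then have "0 \<le> r" by (rule radius_nonneg)
    from s cover1 cover2 obtain g where "g \<in> G1 \<union> G2" "d s g \<le> 3 * r \<or> d s g \<le> 2 * r"
      by blast
    then show "\<exists>c\<in>G1 \<union> G2. d s c \<le> 3 * r" using \<open>0 \<le> r\<close> by (intro bexI[of _ g]) auto
  qed
qed

definition valid_replacements :: "'a set \<Rightarrow> ('a \<Rightarrow> 'a option) \<Rightarrow> bool" where
  "valid_replacements G \<sigma> \<longleftrightarrow> (\<forall>j v. \<sigma> j = Some v \<longrightarrow> j \<in> G \<and> v \<in> S2 \<and> d v j \<le> r)"

fun phase2_large_inv :: "'a set \<Rightarrow> 'a set \<Rightarrow> 'a algB_state \<Rightarrow> bool" where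
  "phase2_large_inv G P (G1, G2, Gs, \<sigma>) \<longleftrightarrow>
     G1 = G \<and> G2 \<subseteq> S2 \<and> separated (G \<union> G2) \<and> valid_replacements G \<sigma> \<and>
     (\<forall>s\<in>P. \<exists>g\<in>G \<union> G2. d s g \<le> 2 * r) \<and> (\<forall>s\<in>P. \<forall>j\<in>G. d s j \<le> r \<longrightarrow> \<sigma> j \<noteq> None)"

lemma replacement_step:
  assumes "step i (G, G2, Gs, \<sigma>) st'" "i \<in> S2" "k1 < card G" "G \<subseteq> S1" "separated G"
    and "valid_replacements G \<sigma>"
  obtains Gs' \<sigma>' where
    "st' = (G, if ereal (2 * r) < dist_set d i (G \<union> G2) then insert i G2 else G2, Gs', \<sigma>')"
    and "valid_replacements G \<sigma>'" and "\<forall>j. \<sigma> j \<noteq> None \<longrightarrow> \<sigma>' j \<noteq> None"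
    and "\<forall>j\<in>G. d i j \<le> r \<longrightarrow> \<sigma>' j \<noteq> None"
proof -
  have "i \<notin> S1" using assms(2) disjoint by blast
  from assms(1) show ?thesis
  proof cases
    case s1
    with \<open>i \<notin> S1\<close> show ?thesis by simp
  next
    case s2_small
    with assms(3) show ?thesis by simp
  next
    case (s2_big_sub j)
    have "d i j \<le> r" using s2_big_sub(6) by simp
    have unique: "j' = j" if "j' \<in> G" "d i j' \<le> r" for j'
      using separated_near_unique[OF metric _ _ assms(5) that(1) s2_big_sub(4) that(2) \<open>d i j \<le> r\<close>]
        assms(2,4) by blast
    show ?thesis
    proof (rule that)
      show "st' = (G, if ereal (2 * r) < dist_set d i (G \<union> G2) then insert i G2 else G2,
          insert i Gs, \<sigma>(j \<mapsto> i))"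
        using s2_big_sub(1) by simp
      show "valid_replacements G (\<sigma>(j \<mapsto> i))"
        using assms(2,6) s2_big_sub(4) \<open>d i j \<le> r\<close> by (auto simp: valid_replacements_def)
      show "\<forall>j'\<in>G. d i j' \<le> r \<longrightarrow> (\<sigma>(j \<mapsto> i)) j' \<noteq> None" using unique by auto
    qed simp
  next
    case s2_big_nosub
    show ?thesis
    proof (rule that)
      show "st' = (G, if ereal (2 * r) < dist_set d i (G \<union> G2) then insert i G2 else G2, Gs, \<sigma>)"
        using s2_big_nosub(1) by simp
      show "\<forall>j\<in>G. d i j \<le> r \<longrightarrow> \<sigma> j \<noteq> None" using s2_big_nosub(4) by auto
    qed (use assms(6) in simp_all)
  qed
qed

lemma phase2_large_step:
  assumes "step i st st'" "i \<in> S2" "phase2_large_inv G P st" "G \<subseteq> S1" "k1 < card G"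
  shows "phase2_large_inv G (insert i P) st'"
proof -
  obtain G2 Gs \<sigma> where st: "st = (G, G2, Gs, \<sigma>)" and G2: "G2 \<subseteq> S2" "separated (G \<union> G2)"
    and \<sigma>: "valid_replacements G \<sigma>"
    and cover: "\<forall>s\<in>P. \<exists>g\<in>G \<union> G2. d s g \<le> 2 * r"
    and replaced: "\<forall>s\<in>P. \<forall>j\<in>G. d s j \<le> r \<longrightarrow> \<sigma> j \<noteq> None"
    using assms(3) by (cases st) auto
  have "separated G" using G2(2) by (rule pairwise_subset) blast
  obtain Gs' \<sigma>' where st': "st' = (G, if ereal (2 * r) < dist_set d i (G \<union> G2) then insert i G2 else G2, Gs', \<sigma>')"
    and \<sigma>': "valid_replacements G \<sigma>'" "\<forall>j. \<sigma> j \<noteq> None \<longrightarrow> \<sigma>' j \<noteq> None"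
      "\<forall>j\<in>G. d i j \<le> r \<longrightarrow> \<sigma>' j \<noteq> None"
    using replacement_step[OF assms(1)[unfolded st] assms(2,5,4) \<open>separated G\<close> \<sigma>] by blast
  have "G \<union> G2 \<subseteq> S1 \<union> S2" "0 \<le> 2 * r" using assms(4) G2(1) radius_nonneg assms(2) by auto
  note greedy = greedy_insert[OF metric this(1) _ finite_point_set[OF this(1)] G2(2) this(2), of i]
  have "(if ereal (2 * r) < dist_set d i (G \<union> G2) then insert i (G \<union> G2) else G \<union> G2) =
        G \<union> (if ereal (2 * r) < dist_set d i (G \<union> G2) then insert i G2 else G2)" by simp
  then show ?thesis
    using greedy G2(1) assms(2) cover replaced \<sigma>' unfolding st' by auto
qed

context
  fixes G1 G2 Gs :: "'a set" and \<sigma> :: "'a \<Rightarrow> 'a option"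
  assumes G1_subset: "G1 \<subseteq> S1" and large_inv: "phase2_large_inv G1 S2 (G1, G2, Gs, \<sigma>)"
begin

lemma unreplaced_card_le: "card {j\<in>G1. \<sigma> j = None} \<le> k1"
proof -
  from large_inv have "separated G1" by (auto intro: pairwise_subset)
  from large_inv have replaced: "\<forall>s\<in>S2. \<forall>j\<in>G1. d s j \<le> r \<longrightarrow> \<sigma> j \<noteq> None" by simp
  have "card {j\<in>G1. \<sigma> j = None} \<le> card (Cs \<inter> S1)"
  proof (rule separated_card_le_reference)
    show "separated {j\<in>G1. \<sigma> j = None}" using \<open>separated G1\<close> by (rule pairwise_subset) auto
    show "\<forall>j\<in>{j\<in>G1. \<sigma> j = None}. \<forall>c\<in>Cs. d j c \<le> r \<longrightarrow> c \<in> S1"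
    proof (intro ballI impI)
      fix j c assume j: "j \<in> {j\<in>G1. \<sigma> j = None}" and "c \<in> Cs" "d j c \<le> r"
      have "c \<in> S1 \<union> S2" using \<open>c \<in> Cs\<close> reference_subset by blast
      moreover have "d c j \<le> r"
        using metric_on_sym[OF metric, of j c] j G1_subset \<open>c \<in> S1 \<union> S2\<close> \<open>d j c \<le> r\<close> by auto
      \<comment> \<open>a reference centre in S2 this close to j would have given j a replacement on arrival\<close>
      ultimately show "c \<in> S1" using replaced j by blast
    qed
  qed (use G1_subset in auto)
  then show ?thesis using reference_feasible by (simp add: fair_feasible_def)
qed

lemma phase2_large_card_le: "card G1 + card G2 \<le> k1 + k2"
proof -
  from large_inv have G2: "G2 \<subseteq> S2" "separated (G1 \<union> G2)" by auto
  have "card G1 + card G2 = card (G1 \<union> G2)"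
    using G1_subset G2(1) disjoint by (intro card_Un_disjoint[symmetric] finite_point_set) auto
  also have "\<dots> \<le> card (Cs \<inter> UNIV)"
    by (rule separated_card_le_reference) (use G1_subset G2 in auto)
  also have "\<dots> \<le> card (Cs \<inter> S1) + card (Cs \<inter> S2)"
    using reference_subset card_Un_le[of "Cs \<inter> S1" "Cs \<inter> S2"]
    by (simp add: Int_Un_distrib[symmetric] Int_absorb2)
  also have "\<dots> \<le> k1 + k2" using reference_feasible by (simp add: fair_feasible_def)
  finally show ?thesis .
qed

lemma replacements_valid:
  assumes "G1'' \<subseteq> {j\<in>G1. \<sigma> j \<noteq> None}"
  shows "(\<lambda>c. the (\<sigma> c)) ` G1'' \<subseteq> S2" and "\<forall>g\<in>G1''. d (the (\<sigma> g)) g \<le> r"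
  using large_inv assms by (auto simp: valid_replacements_def)

lemma swapped_solution_feasible:
  assumes "k1 < card G1" and G1'': "G1'' \<subseteq> {j\<in>G1. \<sigma> j \<noteq> None}" "card G1'' = card G1 - k1"
  shows "fair_feasible S1 S2 k1 k2 (swapped_solution G1 G2 \<sigma> G1'')"
proof -
  let ?C = "swapped_solution G1 G2 \<sigma> G1''"
  have G2: "G2 \<subseteq> S2" using large_inv by simp
  have "G1'' \<subseteq> G1" using G1'' by blast
  moreover have "finite G1" using G1_subset by (auto intro!: finite_point_set)
  ultimately have "finite G1''" by (rule finite_subset)
  note replacements = replacements_valid[OF G1''(1)]
  have "?C \<inter> S1 = G1 - G1''" using G2 replacements(1) G1_subset disjoint by auto
  then have "card (?C \<inter> S1) \<le> k1"
    using card_Diff_subset[OF \<open>finite G1''\<close> \<open>G1'' \<subseteq> G1\<close>] G1''(2) assms(1) by simp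
  moreover have "card (?C \<inter> S2) \<le> k2"
  proof -
    have "?C \<inter> S2 = G2 \<union> (\<lambda>c. the (\<sigma> c)) ` G1''"
      using G2 replacements(1) G1_subset disjoint by auto
    then have "card (?C \<inter> S2) \<le> card G2 + card ((\<lambda>c. the (\<sigma> c)) ` G1'')"
      by (simp add: card_Un_le)
    also have "\<dots> \<le> card G2 + card G1''" using card_image_le[OF \<open>finite G1''\<close>] by simp
    finally show ?thesis using G1''(2) phase2_large_card_le assms(1) by linarith
  qed
  moreover have "?C \<subseteq> S1 \<union> S2" using G2 replacements(1) G1_subset by auto
  ultimately show ?thesis by (simp add: fair_feasible_def)
qed

lemma swapped_solution_near:
  assumes "G1'' \<subseteq> {j\<in>G1. \<sigma> j \<noteq> None}" and "g \<in> G1"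
  shows "\<exists>c\<in>swapped_solution G1 G2 \<sigma> G1''. d g c \<le> r"
proof (cases "g \<in> G1''")
  case True
  note replacements = replacements_valid[OF assms(1)]
  have "the (\<sigma> g) \<in> S2" using replacements(1) True by blast
  then have "d g (the (\<sigma> g)) \<le> r"
    using replacements(2) True metric_on_sym[OF metric, of g "the (\<sigma> g)"] assms(2) G1_subset by auto
  then show ?thesis using True by blast
next
  case False
  have "d g g \<le> r"
    using metric_on_self[OF metric, of g] radius_nonneg[of g] assms(2) G1_subset by auto
  then show ?thesis using False assms(2) by blast
qed

lemma phase2_large_solution:
  assumes "k1 < card G1" and cover1: "\<forall>s\<in>S1. \<exists>g\<in>G1. d s g \<le> 2 * r"
  obtains G1'' where "G1'' \<subseteq> G1" "\<forall>c\<in>G1''. \<sigma> c \<noteq> None"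
    "fair_feasible S1 S2 k1 k2 (swapped_solution G1 G2 \<sigma> G1'')"
    "\<forall>s\<in>S1 \<union> S2. \<exists>c\<in>swapped_solution G1 G2 \<sigma> G1''. d s c \<le> 3 * r"
proof -
  let ?R = "{j\<in>G1. \<sigma> j \<noteq> None}"
  have "finite G1" using G1_subset by (auto intro!: finite_point_set)
  then have "card G1 = card ?R + card {j\<in>G1. \<sigma> j = None}"
    by (subst card_Un_disjoint[symmetric]) (auto intro: arg_cong[where f = card])
  then have "card G1 - k1 \<le> card ?R" using unreplaced_card_le by linarith
  then obtain G1'' where G1'': "G1'' \<subseteq> ?R" "card G1'' = card G1 - k1"
    by (meson obtain_subset_with_card_n)
  let ?C = "swapped_solution G1 G2 \<sigma> G1''"
  have "\<exists>c\<in>?C. d s c \<le> 3 * r" if s: "s \<in> S1 \<union> S2" for s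
  proof -
    from large_inv have G2: "G2 \<subseteq> S2" and cover2: "\<forall>s\<in>S2. \<exists>g\<in>G1 \<union> G2. d s g \<le> 2 * r"
      by auto
    from s cover1 cover2 obtain g where g: "g \<in> G1 \<union> G2" "d s g \<le> 2 * r" by blast
    show ?thesis
    proof (cases "g \<in> G2")
      case True
      then show ?thesis using g radius_nonneg[OF s] by force
    next
      case False
      with g swapped_solution_near[OF G1''(1)] obtain c where "c \<in> ?C" "d g c \<le> r" by blast
      moreover have "?C \<subseteq> S1 \<union> S2"
        using swapped_solution_feasible[OF assms(1) G1''] by (simp add: fair_feasible_def)
      moreover have "g \<in> S1 \<union> S2" using g(1) G2 G1_subset by auto
      ultimately have "d s c \<le> 2 * r + r" using metric_on_triangle_le[OF metric s] g(2) by blast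
      then show ?thesis using \<open>c \<in> ?C\<close> by (intro bexI[of _ c]) auto
    qed
  qed
  then show ?thesis using that[of G1''] G1'' swapped_solution_feasible[OF assms(1) G1''] by blast
qed

end

lemma algB_solution:
  assumes "set xs1 = S1" "set xs2 = S2"
    and run: "algB_run d S1 S2 k1 (2 * ereal r) (xs1 @ xs2) ({}, {}, {}, Map.empty) (G1, G2, Gsub, \<sigma>)"
  obtains G1'' where "G1'' \<subseteq> G1" and "\<forall>c\<in>G1''. \<sigma> c \<noteq> None"
    and "fair_feasible S1 S2 k1 k2 (swapped_solution G1 G2 \<sigma> G1'')"
    and "\<forall>s\<in>S1 \<union> S2. \<exists>c\<in>swapped_solution G1 G2 \<sigma> G1''. d s c \<le> 3 * r"
proof -
  obtain st where run1: "algB_run d S1 S2 k1 (2 * ereal r) xs1 ({}, {}, {}, Map.empty) st"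
    and run2: "algB_run d S1 S2 k1 (2 * ereal r) xs2 st (G1, G2, Gsub, \<sigma>)"
    using algB_run_append[OF run] by blast
  obtain G Gs where st: "st = (G, {}, Gs, Map.empty)" and G: "G \<subseteq> S1" "separated G"
    and cover1: "\<forall>s\<in>S1. \<exists>g\<in>G. d s g \<le> 2 * r"
    using phase1_outcome[OF assms(1) run1] .
  show ?thesis
  proof (cases "card G \<le> k1")
    case True
    have "phase2_small_inv G ({} \<union> set xs2) (G1, G2, Gsub, \<sigma>)"
    proof (rule algB_run_invariant[OF run2, where I = "phase2_small_inv G"])
      fix i P s s' assume "step i s s'" "i \<in> set xs2" "phase2_small_inv G P s"
      then show "phase2_small_inv G (insert i P) s'" using assms(2) phase2_small_step G(1) True by blast
    qed (simp add: st)
    then have "G1 = G" and inv: "phase2_small_inv G1 S2 (G1, G2, Gsub, \<sigma>)" using assms(2) by auto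
    moreover have "swapped_solution G1 G2 \<sigma> {} = G1 \<union> G2" by auto
    ultimately show ?thesis
      using that[of "{}"] phase2_small_solution[OF _ _ _ inv] G(1) True cover1 by simp
  next
    case False
    have "phase2_large_inv G ({} \<union> set xs2) (G1, G2, Gsub, \<sigma>)"
    proof (rule algB_run_invariant[OF run2, where I = "phase2_large_inv G"])
      fix i P s s' assume "step i s s'" "i \<in> set xs2" "phase2_large_inv G P s"
      then show "phase2_large_inv G (insert i P) s'"
        using assms(2) phase2_large_step G(1) False by (meson not_le)
    qed (use G(2) in \<open>simp add: st valid_replacements_def\<close>)
    then have "G1 = G" and inv: "phase2_large_inv G1 S2 (G1, G2, Gsub, \<sigma>)" using assms(2) by auto
    with G(1) False cover1 show ?thesis
      using phase2_large_solution[OF _ inv] that by (metis not_le)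
  qed
qed

end

theorem mainTheorem9:
  fixes d :: "'a \<Rightarrow> 'a \<Rightarrow> real" and S1 S2 :: "'a set" and k1 k2 :: nat
    and xs1 xs2 :: "'a list"
    and G1 G2 Gsub :: "'a set" and \<sigma> :: "'a \<Rightarrow> 'a option"
  assumes "finite (S1 \<union> S2)"
    and "S1 \<inter> S2 = {}"
    and "metric_on (S1 \<union> S2) d"
    and "distinct (xs1 @ xs2)" and "set xs1 = S1" and "set xs2 = S2"
    and "algB_run d S1 S2 k1 (2 * opt_radius d S1 S2 k1 k2) (xs1 @ xs2)
           ({}, {}, {}, Map.empty) (G1, G2, Gsub, \<sigma>)"
  shows "\<exists>G1''\<subseteq>G1. (\<forall>c\<in>G1''. \<sigma> c \<noteq> None) \<and>
           (let C = G2 \<union> (G1 - G1'') \<union> (\<lambda>c. the (\<sigma> c)) ` G1''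
            in fair_feasible S1 S2 k1 k2 C \<and>
               (\<forall>s\<in>S1 \<union> S2. dist_set d s C \<le> 3 * opt_radius d S1 S2 k1 k2))"
proof -
  let ?R = "opt_radius d S1 S2 k1 k2"
  have "S1 \<union> S2 = {} \<or> 0 \<le> ?R" using opt_radius_nonneg[OF assms(3)] by blast
  then consider "S1 \<union> S2 = {} \<or> ?R = \<infinity>" | r where "?R = ereal r" by (cases ?R) auto
  then show ?thesis
  proof cases
    case 1
    have "G1 = {} \<and> G2 = {}"
    proof (cases "S1 \<union> S2 = {}")
      case True
      then have "algB_run d S1 S2 k1 (2 * ?R) [] ({}, {}, {}, Map.empty) (G1, G2, Gsub, \<sigma>)"
        using assms(5-7) by simp
      then show ?thesis by (auto elim: algB_run.cases)
    next
      case False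
      with 1 have "?R = \<infinity>" by blast
      with assms(7) show ?thesis by (intro algB_run_infinite_threshold) simp
    qed
    with 1 show ?thesis by (intro exI[of _ "{}"]) (auto simp: fair_feasible_def)
  next
    case (2 r)
    obtain Cs where "fair_feasible S1 S2 k1 k2 Cs" "\<forall>s\<in>S1 \<union> S2. \<exists>c\<in>Cs. d s c \<le> r"
      using opt_radius_realised[OF assms(1) 2] .
    then interpret algB_analysis d S1 S2 k1 k2 r Cs
      using assms(1-3) by unfold_locales
    have "algB_run d S1 S2 k1 (2 * ereal r) (xs1 @ xs2) ({}, {}, {}, Map.empty) (G1, G2, Gsub, \<sigma>)"
      using assms(7) 2 by simp
    then obtain G1'' where "G1'' \<subseteq> G1" "\<forall>c\<in>G1''. \<sigma> c \<noteq> None"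
      "fair_feasible S1 S2 k1 k2 (swapped_solution G1 G2 \<sigma> G1'')"
      and near: "\<forall>s\<in>S1 \<union> S2. \<exists>c\<in>swapped_solution G1 G2 \<sigma> G1''. d s c \<le> 3 * r"
      by (rule algB_solution[OF assms(5,6)])
    moreover note ball_dist_set_le[OF near]
    ultimately show ?thesis using 2 by (intro exI[of _ G1'']) (simp add: Let_def)
  qed
qed

end
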